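(* Let $k>\ell\ge1$, $m\ge1$ and $w=a^kba^\ell b^m$. For every $u\in L^{\epsilon}_{\vdash_{\{w\}}}$ and every nonempty prefix $p$ of $u$, $\nu(p)\ge \frac{k+\ell}{m+1}$, where $\nu(p)=|p|_a/|p|_b$ (with $\nu(p)=\infty$ if $|p|_b=0$).
   Context: $|u|_c$ is the number of occurrences of letter $c$ in $u$. For words $u,v$, the shuffle $u \sqcup\!\sqcup v$ is the set of all words $u_1v_1\cdots u_kv_k$ with $k\ge 1$, $u=u_1\cdots u_k$, $v=v_1\cdots v_k$ (pieces possibly empty). For a finite set $I$ of words, $v \vdash_I w$ means $w \in v \sqcup\!\sqcup u$ for some $u\in I$; $\vdash_I^*$ is its reflexive-transitive closure and $L^{\epsilon}_{\vdash_I}=\{w : \epsilon \vdash_I^* w\}$. *)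

theory Defs
  imports Main "HOL-Library.Extended_Real"
begin

datatype letter = a | b

definition occ :: "'c list \<Rightarrow> 'c \<Rightarrow> nat" where
  "occ u c = count_list u c"

definition shuffle :: "'c list \<Rightarrow> 'c list \<Rightarrow> 'c list set" where
  "shuffle u v = {concat (map (\<lambda>(x, y). x @ y) (zip us vs)) | us vs.
       length us = length vs \<and> length us \<ge> 1 \<and> concat us = u \<and> concat vs = v}"

definition derives1 :: "'c list set \<Rightarrow> 'c list \<Rightarrow> 'c list \<Rightarrow> bool" where
  "derives1 I v w \<longleftrightarrow> (\<exists>u\<in>I. w \<in> shuffle v u)"

definition L_eps :: "'c list set \<Rightarrow> 'c list set" where
  "L_eps I = {w. (derives1 I)\<^sup>*\<^sup>* [] w}"

definition nu :: "letter list \<Rightarrow> ereal" where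
  "nu p = (if occ p b = 0 then \<infinity> else ereal (real (occ p a) / real (occ p b)))"

end

theory Submission
  imports Defs "HOL-Library.Sublist" "HOL-Library.Multiset"
begin

(* Give a the weight m + 1 and b the weight -(k + l). Every prefix of w has nonnegative weight:
   the weight rises along a^k, stays nonnegative after the single b because l <= k, and then
   falls along b^m to the total weight 0 of w. A prefix of a shuffle of v and u is a shuffle of a
   prefix of v and a prefix of u, so its weight is the sum of theirs; hence nonnegative prefix
   weights propagate along derivations. For a prefix p of u this says exactly
   (k + l) |p|_b <= (m + 1) |p|_a. *)

lemma count_list_replicate: "count_list (replicate n x) y = (if x = y then n else 0)"
  by (induction n) auto

lemma prefix_replicate: "prefix p (replicate n x) \<Longrightarrow> \<exists>j\<le>n. p = replicate j x"
proof -
  assume "prefix p (replicate n x)"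
  then have "p = take (length p) (replicate n x)" by (metis append_eq_conv_conj prefix_def)
  then show ?thesis by (metis min.cobounded2 take_replicate)
qed

definition prefix_weights_nonneg :: "('c \<Rightarrow> 'w::ordered_comm_monoid_add) \<Rightarrow> 'c list \<Rightarrow> bool" where
  "prefix_weights_nonneg f w \<longleftrightarrow> (\<forall>p. prefix p w \<longrightarrow> 0 \<le> sum_list (map f p))"

lemma prefix_of_shuffle:
  assumes "w \<in> shuffle v u" and "prefix p w"
  shows "\<exists>p\<^sub>1 p\<^sub>2. prefix p\<^sub>1 v \<and> prefix p\<^sub>2 u \<and> mset p = mset p\<^sub>1 + mset p\<^sub>2"
proof -
  obtain vs us where "length vs = length us" "concat vs = v" "concat us = u"
    and "w = concat (map (\<lambda>(x, y). x @ y) (zip vs us))"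
    using assms(1) unfolding shuffle_def by blast
  then show ?thesis using assms(2)
  proof (induction vs us arbitrary: v u w p rule: list_induct2)
    case Nil
    then show ?case by simp
  next
    case (Cons x vs y us)
    let ?w' = "concat (map (\<lambda>(x, y). x @ y) (zip vs us))"
    have "prefix p (x @ y @ ?w')" using Cons.prems by simp
    then consider "prefix p x"
      | q where "p = x @ q" "prefix q y"
      | q where "p = x @ y @ q" "prefix q ?w'"
      by (auto simp: prefix_append)
    then show ?case
    proof cases
      case 1
      then show ?thesis using Cons.prems by (intro exI[of _ p] exI[of _ "[]"]) auto
    next
      case (2 q)
      then show ?thesis using Cons.prems by (intro exI[of _ x] exI[of _ q]) auto
    next
      case (3 q)
      then obtain q\<^sub>1 q\<^sub>2 where "prefix q\<^sub>1 (concat vs)" "prefix q\<^sub>2 (concat us)"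
        "mset q = mset q\<^sub>1 + mset q\<^sub>2"
        using Cons.IH by blast
      then show ?thesis using Cons.prems 3
        by (intro exI[of _ "x @ q\<^sub>1"] exI[of _ "y @ q\<^sub>2"]) auto
    qed
  qed
qed

lemma prefix_weights_nonneg_shuffle:
  assumes "prefix_weights_nonneg f v" and "prefix_weights_nonneg f u" and "w \<in> shuffle v u"
  shows "prefix_weights_nonneg f w"
  unfolding prefix_weights_nonneg_def
proof (intro allI impI)
  fix p assume "prefix p w"
  then obtain p\<^sub>1 p\<^sub>2 where "prefix p\<^sub>1 v" "prefix p\<^sub>2 u" and p: "mset p = mset p\<^sub>1 + mset p\<^sub>2"
    using prefix_of_shuffle assms(3) by blast
  have "sum_list (map f p) = sum_list (map f p\<^sub>1) + sum_list (map f p\<^sub>2)"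
    by (metis p image_mset_union mset_map sum_mset.union sum_mset_sum_list)
  then show "0 \<le> sum_list (map f p)"
    using assms \<open>prefix p\<^sub>1 v\<close> \<open>prefix p\<^sub>2 u\<close>
    by (simp add: prefix_weights_nonneg_def)
qed

lemma prefix_weights_nonneg_L_eps:
  assumes "\<forall>v\<in>I. prefix_weights_nonneg f v" and "w \<in> L_eps I"
  shows "prefix_weights_nonneg f w"
proof -
  have "(derives1 I)\<^sup>*\<^sup>* [] w" using assms(2) by (simp add: L_eps_def)
  then show ?thesis
  proof (induction rule: rtranclp_induct)
    case base
    then show ?case by (simp add: prefix_weights_nonneg_def)
  next
    case (step v w)
    then obtain u where "u \<in> I" "w \<in> shuffle v u" by (auto simp: derives1_def)
    then show ?case using step.IH assms(1) prefix_weights_nonneg_shuffle by blast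
  qed
qed

definition letter_weight :: "nat \<Rightarrow> nat \<Rightarrow> letter \<Rightarrow> int" where
  "letter_weight d c x = (case x of a \<Rightarrow> int d | b \<Rightarrow> - int c)"

lemma sum_list_letter_weight:
  "sum_list (map (letter_weight d c) p) = int d * int (occ p a) - int c * int (occ p b)"
  by (induction p) (auto simp: letter_weight_def occ_def algebra_simps split: letter.split)

lemma prefix_weights_nonneg_letter_weight_iff:
  "prefix_weights_nonneg (letter_weight d c) w \<longleftrightarrow> (\<forall>p. prefix p w \<longrightarrow> c * occ p b \<le> d * occ p a)"
  unfolding prefix_weights_nonneg_def sum_list_letter_weight
  by (metis diff_ge_0_iff_ge mult.commute of_nat_le_iff of_nat_mult)

lemma prefix_counts_generator:
  assumes "l \<le> k" and "1 \<le> m"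
    and "prefix p (replicate k a @ [b] @ replicate l a @ replicate m b)"
  shows "(k + l) * occ p b \<le> (m + 1) * occ p a"
proof -
  consider (in_a\<^sub>k) "prefix p (replicate k a)"
    | (in_a\<^sub>l) r where "p = replicate k a @ [b] @ r" "prefix r (replicate l a)"
    | (in_b\<^sub>m) s where "p = replicate k a @ [b] @ replicate l a @ s" "prefix s (replicate m b)"
    using assms(3) by (auto simp only: prefix_append prefix_Cons append_Cons append_Nil
        append_Nil2 prefix_order.refl)
  then show ?thesis
  proof cases
    case in_a\<^sub>k
    obtain i where "p = replicate i a" using prefix_replicate[OF in_a\<^sub>k] by blast
    then show ?thesis by (simp add: occ_def count_list_replicate)
  next
    case in_a\<^sub>l
    obtain j where "r = replicate j a" using prefix_replicate[OF in_a\<^sub>l(2)] by blast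
    moreover have "k + l \<le> (m + 1) * (k + j)"
    proof -
      have "k + l \<le> 2 * k" using assms(1) by simp
      also have "\<dots> \<le> (m + 1) * (k + j)" using assms(2) by (intro mult_le_mono) auto
      finally show ?thesis .
    qed
    ultimately show ?thesis using in_a\<^sub>l(1) by (simp add: occ_def count_list_replicate)
  next
    case in_b\<^sub>m
    obtain j where "j \<le> m" "s = replicate j b" using prefix_replicate[OF in_b\<^sub>m(2)] by blast
    then show ?thesis using in_b\<^sub>m(1) by (simp add: occ_def count_list_replicate mult.commute)
  qed
qed

lemma nu_ge_of_counts:
  assumes "c * occ p b \<le> d * occ p a" and "0 < d"
  shows "ereal (real c / real d) \<le> nu p"
proof (cases "occ p b = 0")
  case False
  have "real c * real (occ p b) \<le> real d * real (occ p a)"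
    using assms(1) by (metis of_nat_le_iff of_nat_mult)
  then show ?thesis using False assms(2) by (simp add: nu_def divide_simps mult.commute)
qed (simp add: nu_def)

theorem lemma5:
  fixes k l m :: nat and u p :: "letter list"
  assumes "k > l" and "l \<ge> 1" and "m \<ge> 1"
    and "u \<in> L_eps {replicate k a @ [b] @ replicate l a @ replicate m b}"
    and "\<exists>s. u = p @ s" and "p \<noteq> []"
  shows "nu p \<ge> ereal (real (k + l) / real (m + 1))"
proof -
  let ?f = "letter_weight (m + 1) (k + l)"
  have "prefix_weights_nonneg ?f (replicate k a @ [b] @ replicate l a @ replicate m b)"
    using prefix_counts_generator assms(1,3) by (simp add: prefix_weights_nonneg_letter_weight_iff)
  then have "prefix_weights_nonneg ?f u"
    using prefix_weights_nonneg_L_eps assms(4) by blast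
  then have "(k + l) * occ p b \<le> (m + 1) * occ p a"
    using assms(5) by (simp add: prefix_weights_nonneg_letter_weight_iff prefix_def)
  then show ?thesis by (rule nu_ge_of_counts) simp
qed

end
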